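(* Let $\lambda>0$, let $(\mathbf{l}_n)_{n\in\mathbb{N}^+}$ be a sequence with $\mathbf{l}_n\in[-1,1]$, and let $(a_n)_{n\in\mathbb{N}^+}$ be a sequence of positive integers with $a_{n+1}>a_n$. Suppose that $\sum_{n=1}^{\infty}e^{-\mathbf{l}_n a_n t}$ is majorized by $t^{-\lambda}$ as $t\to0^+$ (i.e. there is $C>0$ with $\sum_{n=1}^{\infty}e^{-\mathbf{l}_n a_n t}\le C t^{-\lambda}$ for all sufficiently small $t>0$). Then the Euler product $$\prod_{n=1}^{\infty}\frac{1}{1-\mathbf{l}_n a_n^{-s}}$$ admits an analytic continuation to the half-plane $\Re(s)>\max(1/2,\lambda)$ having no zeros and no singularities there.
   Context: For $a>0$, $a^{-s}=e^{-s\ln a}$. *)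

theory Defs
  imports "HOL-Analysis.Analysis"
begin

end

theory Submission
  imports Defs "HOL-Complex_Analysis.Complex_Analysis"
begin

text \<open>Choosing \<open>t = 1 / a(n)\<close> in the majorant, each of the first \<open>n\<close> terms of the
  exponential sum is at least \<open>exp (-1)\<close>, so \<open>n \<le> e C a(n) powr \<lambda>\<close>; hence
  \<open>\<Sum> a(n) powr (-\<sigma>)\<close> converges for \<open>\<sigma> > \<lambda>\<close>. For \<open>Re s \<ge> \<sigma> \<ge> 1/2\<close> and \<open>a(n) \<ge> 2\<close>
  the number \<open>l(n) a(n) powr (-s)\<close> has modulus at most \<open>1/sqrt 2 < 3/4\<close>, so the Euler factor
  differs from \<open>1\<close> by at most \<open>4 a(n) powr (-\<sigma>)\<close>. The product therefore converges absolutely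
  and locally uniformly on \<open>Re s > max (1/2) \<lambda>\<close>; as no factor vanishes, the limit is
  holomorphic and zero-free there.\<close>

lemma convergent_prod_of_eventually_norm_le:
  fixes f :: "nat \<Rightarrow> 'a :: {real_normed_div_algebra, comm_ring_1, banach}"
  assumes "summable M" and "\<forall>\<^sub>F n in sequentially. norm (f n - 1) \<le> M n"
  shows "convergent_prod f"
proof -
  have "summable (\<lambda>n. norm (f n - 1))"
    using assms by (intro summable_comparison_test_ev[OF _ assms(1)]) auto
  then show ?thesis
    by (intro abs_convergent_prod_imp_convergent_prod summable_imp_abs_convergent_prod)
qed

lemma holomorphic_on_prodinf:
  fixes f :: "nat \<Rightarrow> complex \<Rightarrow> complex"
  assumes holo: "\<And>n. f n holomorphic_on S"
    and local_bound: "\<And>z. z \<in> S \<Longrightarrow> \<exists>r>0. \<exists>M. cball z r \<subseteq> S \<and> summable M \<and>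
            (\<forall>\<^sub>F n in sequentially. \<forall>s\<in>cball z r. norm (f n s - 1) \<le> M n)"
  shows "(\<lambda>s. \<Prod>n. f n s) holomorphic_on S"
  unfolding holomorphic_on_def
proof
  fix z assume "z \<in> S"
  then obtain r M where r: "r > 0" and sub: "cball z r \<subseteq> S" and M: "summable M"
    and bound: "\<forall>\<^sub>F n in sequentially. \<forall>s\<in>cball z r. norm (f n s - 1) \<le> M n"
    using local_bound by blast
  have partial_holo: "(\<lambda>s. \<Prod>n<N. f n s) holomorphic_on S" for N
    by (intro holomorphic_intros holo)
  have "uniformly_convergent_on (cball z r) (\<lambda>N s. \<Prod>n<N. f n s)"
  proof (rule uniformly_convergent_on_prod')
    show "continuous_on (cball z r) (f n)" for n
      using holomorphic_on_imp_continuous_on[OF holo] sub continuous_on_subset by blast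
    show "uniformly_convergent_on (cball z r) (\<lambda>N s. \<Sum>n<N. norm (f n s - 1))"
      using bound M by (intro Weierstrass_m_test'_ev) auto
  qed simp
  then have "uniform_limit (cball z r) (\<lambda>N s. \<Prod>n<N. f n s) (\<lambda>s. lim (\<lambda>N. \<Prod>n<N. f n s)) sequentially"
    by (simp add: uniformly_convergent_uniform_limit_iff)
  moreover have "lim (\<lambda>N. \<Prod>n<N. f n s) = (\<Prod>n. f n s)" if "s \<in> cball z r" for s
  proof -
    have "convergent_prod (\<lambda>n. f n s)"
      using bound that by (intro convergent_prod_of_eventually_norm_le[OF M]) (auto elim: eventually_mono)
    then have "(\<lambda>N. \<Prod>n<N. f n s) \<longlonglongrightarrow> (\<Prod>n. f n s)"
      using convergent_prod_LIMSEQ LIMSEQ_lessThan_iff_atMost by blast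
    then show ?thesis by (rule limI)
  qed
  ultimately have "uniform_limit (cball z r) (\<lambda>N s. \<Prod>n<N. f n s) (\<lambda>s. \<Prod>n. f n s) sequentially"
    by (subst (asm) uniform_limit_cong'[OF refl, where i="\<lambda>s. \<Prod>n. f n s"]) auto
  then obtain "(\<lambda>s. \<Prod>n. f n s) holomorphic_on ball z r"
  proof (rule holomorphic_uniform_limit[rotated])
    show "\<forall>\<^sub>F N in sequentially. continuous_on (cball z r) (\<lambda>s. \<Prod>n<N. f n s) \<and>
            (\<lambda>s. \<Prod>n<N. f n s) holomorphic_on ball z r"
    proof (intro always_eventually allI conjI)
      fix N
      show "continuous_on (cball z r) (\<lambda>s. \<Prod>n<N. f n s)"
        using holomorphic_on_imp_continuous_on[OF partial_holo] sub continuous_on_subset by blast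
      show "(\<lambda>s. \<Prod>n<N. f n s) holomorphic_on ball z r"
        using partial_holo sub ball_subset_cball holomorphic_on_subset by blast
    qed
  qed auto
  then show "(\<lambda>s. \<Prod>n. f n s) field_differentiable at z within S"
    using r by (meson centre_in_ball field_differentiable_at_within holomorphic_on_imp_differentiable_at open_ball)
qed

lemma holomorphic_on_prodinf_halfplane:
  fixes f :: "nat \<Rightarrow> complex \<Rightarrow> complex"
  assumes holo: "\<And>n. f n holomorphic_on {s. Re s > \<sigma>0}"
    and bound: "\<And>\<sigma>. \<sigma> > \<sigma>0 \<Longrightarrow> \<exists>M. summable M \<and>
            (\<forall>\<^sub>F n in sequentially. \<forall>s. Re s \<ge> \<sigma> \<longrightarrow> norm (f n s - 1) \<le> M n)"
  shows "(\<lambda>s. \<Prod>n. f n s) holomorphic_on {s. Re s > \<sigma>0}"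
proof (rule holomorphic_on_prodinf[OF holo])
  fix z assume "z \<in> {s. Re s > \<sigma>0}"
  define r where "r = (Re z - \<sigma>0) / 2"
  have r: "r > 0" and \<sigma>: "Re z - r > \<sigma>0"
    using \<open>z \<in> _\<close> by (auto simp: r_def field_simps)
  have Re_ge: "Re s \<ge> Re z - r" if "s \<in> cball z r" for s
    using that abs_Re_le_cmod[of "z - s"] by (simp add: dist_norm)
  obtain M where M: "summable M"
    and ev: "\<forall>\<^sub>F n in sequentially. \<forall>s. Re s \<ge> Re z - r \<longrightarrow> norm (f n s - 1) \<le> M n"
    using bound[OF \<sigma>] by blast
  have "cball z r \<subseteq> {s. Re s > \<sigma>0}"
    using Re_ge \<sigma> by force
  moreover have "\<forall>\<^sub>F n in sequentially. \<forall>s\<in>cball z r. norm (f n s - 1) \<le> M n"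
    using ev by eventually_elim (use Re_ge in blast)
  ultimately show "\<exists>r>0. \<exists>M. cball z r \<subseteq> {s. Re s > \<sigma>0} \<and> summable M \<and>
            (\<forall>\<^sub>F n in sequentially. \<forall>s\<in>cball z r. norm (f n s - 1) \<le> M n)"
    using r M by blast
qed

lemma strict_mono_Suc_le:
  fixes b :: "nat \<Rightarrow> nat"
  assumes "strict_mono b" and "b 0 > 0"
  shows "Suc n \<le> b n"
proof (induction n)
  case (Suc n)
  then show ?case
    using strict_monoD[OF assms(1), of n "Suc n"] by simp
qed (use assms(2) in simp)

lemma count_le_suminf_exp:
  fixes l :: "nat \<Rightarrow> real" and b :: "nat \<Rightarrow> nat"
  assumes "mono b" and l_le: "\<And>k. l k \<le> 1" and "t > 0" and "real (b n) * t \<le> 1"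
    and "summable (\<lambda>k. exp (- l k * real (b k) * t))"
  shows "exp (-1) * real (Suc n) \<le> (\<Sum>k. exp (- l k * real (b k) * t))"
proof -
  have "exp (-1) \<le> exp (- l k * real (b k) * t)" if "k \<le> n" for k
  proof -
    have "l k * real (b k) * t \<le> real (b k) * t"
      using mult_right_mono[OF l_le[of k], of "real (b k) * t"] \<open>t > 0\<close> by (simp add: mult.assoc)
    also have "\<dots> \<le> real (b n) * t"
      using monoD[OF \<open>mono b\<close> that] \<open>t > 0\<close> by (simp add: mult_right_mono)
    finally show ?thesis using assms(4) by simp
  qed
  then have "(\<Sum>k<Suc n. exp (-1)) \<le> (\<Sum>k<Suc n. exp (- l k * real (b k) * t))"
    by (intro sum_mono) simp
  then have "exp (-1) * real (Suc n) \<le> (\<Sum>k<Suc n. exp (- l k * real (b k) * t))"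
    by (simp add: mult.commute)
  also have "\<dots> \<le> (\<Sum>k. exp (- l k * real (b k) * t))"
    using assms(5) by (rule sum_le_suminf) auto
  finally show ?thesis .
qed

lemma summable_powr_neg_of_growth:
  fixes b :: "nat \<Rightarrow> nat"
  assumes lam: "lam > 0" and K: "K > 0" and \<sigma>: "\<sigma> > lam"
    and growth: "\<forall>\<^sub>F n in sequentially. real (Suc n) \<le> K * real (b n) powr lam"
  shows "summable (\<lambda>n. real (b n) powr (- \<sigma>))"
proof (rule summable_comparison_test_ev)
  have "summable (\<lambda>n. real (Suc n) powr (- (\<sigma> / lam)))"
    using \<sigma> lam by (subst summable_Suc_iff, subst summable_real_powr_iff) (simp add: field_simps)
  then show "summable (\<lambda>n. K powr (\<sigma> / lam) * real (Suc n) powr (- (\<sigma> / lam)))"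
    by (rule summable_mult)
  show "\<forall>\<^sub>F n in sequentially. norm (real (b n) powr (- \<sigma>)) \<le> K powr (\<sigma> / lam) * real (Suc n) powr (- (\<sigma> / lam))"
    using growth
  proof eventually_elim
    case (elim n)
    then have le: "real (Suc n) / K \<le> real (b n) powr lam"
      using K by (simp add: field_simps)
    have "real (b n) powr (- \<sigma>) = (real (b n) powr lam) powr (- (\<sigma> / lam))"
      using lam by (simp add: powr_powr)
    also have "\<dots> \<le> (real (Suc n) / K) powr (- (\<sigma> / lam))"
      using le K lam \<sigma> by (intro powr_mono2') auto
    also have "\<dots> = K powr (\<sigma> / lam) * real (Suc n) powr (- (\<sigma> / lam))"
      using K by (simp add: powr_divide powr_minus field_simps)
    finally show ?case by simp
  qed
qed

lemma summable_powr_neg_of_exp_majorant: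
  fixes l :: "nat \<Rightarrow> real" and b :: "nat \<Rightarrow> nat"
  assumes b: "strict_mono b" "b 0 > 0" and l_le: "\<And>k. l k \<le> 1"
    and lam: "lam > 0" and C: "C > 0" and \<sigma>: "\<sigma> > lam"
    and majorant: "\<forall>\<^sub>F t in at_right 0. summable (\<lambda>k. exp (- l k * real (b k) * t)) \<and>
            (\<Sum>k. exp (- l k * real (b k) * t)) \<le> C * t powr (- lam)"
  shows "summable (\<lambda>n. real (b n) powr (- \<sigma>))"
proof (rule summable_powr_neg_of_growth[OF lam _ \<sigma>])
  have b_ge: "Suc n \<le> b n" for n
    using strict_mono_Suc_le[OF b] .
  have "filterlim (\<lambda>n. real (b n)) at_top sequentially"
    using b_ge by (intro filterlim_at_top_mono[OF filterlim_real_sequentially])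
      (auto intro!: always_eventually simp: Suc_le_eq less_imp_le)
  then have "filterlim (\<lambda>n. inverse (real (b n))) (at_right 0) sequentially"
    by (rule filterlim_compose[OF filterlim_inverse_at_right_top])
  then have "\<forall>\<^sub>F n in sequentially. summable (\<lambda>k. exp (- l k * real (b k) * inverse (real (b n)))) \<and>
      (\<Sum>k. exp (- l k * real (b k) * inverse (real (b n)))) \<le> C * inverse (real (b n)) powr (- lam)"
    by (rule eventually_compose_filterlim[OF majorant])
  then show "\<forall>\<^sub>F n in sequentially. real (Suc n) \<le> exp 1 * C * real (b n) powr lam"
  proof eventually_elim
    case (elim n)
    have pos: "real (b n) > 0"
      using b_ge[of n] by simp
    have "exp (-1) * real (Suc n) \<le> (\<Sum>k. exp (- l k * real (b k) * inverse (real (b n))))"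
      by (rule count_le_suminf_exp[OF strict_mono_mono[OF b(1)] l_le]) (use elim pos in auto)
    also have "\<dots> \<le> C * real (b n) powr lam"
      using elim pos by (simp add: powr_minus_divide powr_divide inverse_eq_divide)
    finally have "exp (-1) * real (Suc n) \<le> C * real (b n) powr lam" .
    then show ?case
      by (simp add: exp_minus field_simps)
  qed
qed (use C in simp)

lemma norm_inverse_one_minus_sub_one_le:
  fixes z :: "'a :: real_normed_field"
  assumes "norm z \<le> 3/4"
  shows "norm (1 / (1 - z) - 1) \<le> 4 * norm z"
proof -
  have denom: "norm (1 - z) \<ge> 1/4"
    using norm_triangle_ineq2[of 1 z] assms by simp
  then have "1 - z \<noteq> 0"
    by auto
  then have "1 / (1 - z) - 1 = z / (1 - z)"
    by (simp add: field_simps)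
  then have "norm (1 / (1 - z) - 1) = norm z / norm (1 - z)"
    by (simp add: norm_divide)
  also have "\<dots> \<le> norm z / (1/4)"
    using denom by (intro divide_left_mono) auto
  finally show ?thesis by simp
qed

lemma nat_powr_neg_le_three_quarters:
  assumes "m \<ge> 2" and "\<sigma> \<ge> 1/2"
  shows "real m powr (- \<sigma>) \<le> 3/4"
proof -
  have "real m powr (- \<sigma>) \<le> real m powr (- (1/2))"
    using assms by (intro powr_mono) auto
  also have "\<dots> = inverse (sqrt (real m))"
    using assms by (simp add: powr_minus powr_half_sqrt)
  also have "\<dots> \<le> 3/4"
  proof -
    have "(4/3)\<^sup>2 \<le> real m"
      using assms by (simp add: power2_eq_square)
    then have "4/3 \<le> sqrt (real m)"
      by (rule real_le_rsqrt)
    then show ?thesis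
      by (simp add: inverse_eq_divide divide_le_eq)
  qed
  finally show ?thesis .
qed

lemma norm_of_real_mult_nat_powr_le:
  fixes x :: real and m :: nat and s :: complex
  assumes "\<bar>x\<bar> \<le> 1"
  shows "norm (complex_of_real x * of_nat m powr (- s)) \<le> real m powr (- Re s)"
proof -
  have "norm (of_nat m powr (- s) :: complex) = real m powr (- Re s)"
    by (subst norm_powr_real_powr) auto
  then show ?thesis
    using assms by (simp add: norm_mult mult_left_le_one_le)
qed

lemma euler_factor_sub_one_bound:
  fixes x :: real and m :: nat and s :: complex
  assumes x: "\<bar>x\<bar> \<le> 1" and m: "m \<ge> 2" and \<sigma>: "1/2 \<le> \<sigma>" "\<sigma> \<le> Re s"
  shows "norm (1 / (1 - complex_of_real x * of_nat m powr (- s)) - 1) \<le> 4 * real m powr (- \<sigma>)"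
proof -
  have "norm (complex_of_real x * of_nat m powr (- s)) \<le> real m powr (- Re s)"
    using x by (rule norm_of_real_mult_nat_powr_le)
  also have "\<dots> \<le> real m powr (- \<sigma>)"
    using m \<sigma> by (intro powr_mono) auto
  finally have z: "norm (complex_of_real x * of_nat m powr (- s)) \<le> real m powr (- \<sigma>)" .
  moreover have "real m powr (- \<sigma>) \<le> 3/4"
    using m \<sigma> by (intro nat_powr_neg_le_three_quarters) auto
  ultimately show ?thesis
    using norm_inverse_one_minus_sub_one_le[of "complex_of_real x * of_nat m powr (- s)"] by linarith
qed

lemma euler_factor_denominator_nonzero:
  fixes x :: real and m :: nat and s :: complex
  assumes x: "\<bar>x\<bar> \<le> 1" and s: "Re s > 0" and pole: "m = 1 \<longrightarrow> x \<noteq> 1"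
  shows "1 - complex_of_real x * of_nat m powr (- s) \<noteq> 0"
proof (cases "m \<ge> 2")
  case True
  have "norm (complex_of_real x * of_nat m powr (- s)) \<le> real m powr (- Re s)"
    using x by (rule norm_of_real_mult_nat_powr_le)
  also have "\<dots> < 1"
    using True s by (intro powr_less_one) auto
  finally show ?thesis by auto
next
  case False
  then consider "m = 0" | "m = 1" by linarith
  then show ?thesis
    by cases (use pole in auto)
qed

lemma euler_factors_summable_majorant:
  fixes x :: "nat \<Rightarrow> real" and b :: "nat \<Rightarrow> nat"
  assumes b: "strict_mono b" "b 0 > 0" and x: "\<And>n. \<bar>x n\<bar> \<le> 1"
    and lam: "lam > 0" and C: "C > 0"
    and majorant: "\<forall>\<^sub>F t in at_right 0. summable (\<lambda>k. exp (- x k * real (b k) * t)) \<and>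
            (\<Sum>k. exp (- x k * real (b k) * t)) \<le> C * t powr (- lam)"
    and \<sigma>: "\<sigma> > max (1/2) lam"
  shows "\<exists>M. summable M \<and> (\<forall>\<^sub>F n in sequentially. \<forall>s. Re s \<ge> \<sigma> \<longrightarrow>
           norm (1 / (1 - complex_of_real (x n) * of_nat (b n) powr (- s)) - 1) \<le> M n)"
proof (intro exI conjI)
  show "summable (\<lambda>n. 4 * real (b n) powr (- \<sigma>))"
    using \<sigma> x by (intro summable_mult summable_powr_neg_of_exp_majorant[OF b _ lam C _ majorant])
      (auto simp: abs_le_iff)
  show "\<forall>\<^sub>F n in sequentially. \<forall>s. Re s \<ge> \<sigma> \<longrightarrow>
          norm (1 / (1 - complex_of_real (x n) * of_nat (b n) powr (- s)) - 1) \<le> 4 * real (b n) powr (- \<sigma>)"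
    using eventually_ge_at_top[of 1]
  proof eventually_elim
    case (elim n)
    then have "b n \<ge> 2"
      using strict_mono_Suc_le[OF b, of n] by linarith
    then show ?case
      using \<sigma> x by (auto intro: euler_factor_sub_one_bound)
  qed
qed

theorem mainTheorem3:
  fixes lam :: real and l :: "nat \<Rightarrow> real" and a :: "nat \<Rightarrow> nat"
  assumes lam_pos: "lam > 0"
    and l_range: "\<forall>n\<ge>1. l n \<in> {-1..1}"
    and a_pos: "\<forall>n\<ge>1. a n > 0"
    and a_incr: "\<forall>n\<ge>1. a (Suc n) > a n"
    and factor_defined: "\<forall>n\<ge>1. a n = 1 \<longrightarrow> l n \<noteq> 1"
    and majorized: "\<exists>C>0. eventually (\<lambda>t.
            summable (\<lambda>n. exp (- l (Suc n) * real (a (Suc n)) * t)) \<and>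
            (\<Sum>n. exp (- l (Suc n) * real (a (Suc n)) * t)) \<le> C * t powr (- lam))
          (at_right 0)"
  shows "\<exists>F :: complex \<Rightarrow> complex.
           F holomorphic_on {s. Re s > max (1/2) lam} \<and>
           (\<forall>s\<in>{s. Re s > max (1/2) lam}. F s \<noteq> 0) \<and>
           (\<exists>\<sigma>0. \<forall>s. Re s > max \<sigma>0 (max (1/2) lam) \<longrightarrow>
              (\<lambda>n. 1 / (1 - complex_of_real (l (Suc n)) * of_nat (a (Suc n)) powr (- s)))
                has_prod F s)"
proof -
  define b where "b = (\<lambda>n. a (Suc n))"
  define x where "x = (\<lambda>n. l (Suc n))"
  define f where "f = (\<lambda>n s. 1 / (1 - complex_of_real (x n) * of_nat (b n) powr (- s)))"
  define S where "S = {s. Re s > max (1/2) lam}"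
  have b: "strict_mono b" "b 0 > 0"
    using a_pos a_incr by (auto simp: b_def strict_mono_Suc_iff)
  have x: "\<bar>x n\<bar> \<le> 1" for n
    using l_range by (auto simp: x_def abs_le_iff)
  obtain C where C: "C > 0" and majorant: "\<forall>\<^sub>F t in at_right 0.
      summable (\<lambda>k. exp (- x k * real (b k) * t)) \<and> (\<Sum>k. exp (- x k * real (b k) * t)) \<le> C * t powr (- lam)"
    using majorized unfolding b_def x_def by blast
  have denom_nonzero: "1 - complex_of_real (x n) * of_nat (b n) powr (- s) \<noteq> 0" if "Re s > 0" for n s
    using factor_defined x that by (intro euler_factor_denominator_nonzero) (auto simp: b_def x_def)
  have bound: "\<exists>M. summable M \<and> (\<forall>\<^sub>F n in sequentially. \<forall>s. Re s \<ge> \<sigma> \<longrightarrow> norm (f n s - 1) \<le> M n)"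
    if "\<sigma> > max (1/2) lam" for \<sigma>
    unfolding f_def by (rule euler_factors_summable_majorant[OF b x lam_pos C majorant that])
  have conv: "convergent_prod (\<lambda>n. f n s)" if s: "s \<in> S" for s
  proof -
    obtain M where M: "summable M"
      and "\<forall>\<^sub>F n in sequentially. \<forall>s'. Re s' \<ge> Re s \<longrightarrow> norm (f n s' - 1) \<le> M n"
      using bound[of "Re s"] s by (auto simp: S_def)
    then show ?thesis
      by (intro convergent_prod_of_eventually_norm_le[OF M]) (auto elim: eventually_mono)
  qed
  have "(\<lambda>s. \<Prod>n. f n s) holomorphic_on S"
    unfolding S_def using bound denom_nonzero
    by (intro holomorphic_on_prodinf_halfplane) (auto simp: f_def intro!: holomorphic_intros)
  moreover have "(\<Prod>n. f n s) \<noteq> 0" if "s \<in> S" for s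
    using that denom_nonzero by (intro prodinf_nonzero conv) (auto simp: S_def f_def)
  moreover have "(\<lambda>n. f n s) has_prod (\<Prod>n. f n s)" if "Re s > max 0 (max (1/2) lam)" for s
    using that by (intro convergent_prod_has_prod conv) (simp add: S_def)
  ultimately show ?thesis
    unfolding S_def f_def b_def x_def by blast
qed

end
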